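(* Let $f:\mathbb{R}^d\to\mathbb{R}$ be differentiable with $f^*:=\sup_{\theta} f(\theta)<\infty$. Assume (i) $f$ is $L$-smooth; (ii) $f$ satisfies the non-uniform Łojasiewicz condition with degree $\xi=0$, i.e. there is a function $C:\mathbb{R}^d\to(0,\infty)$ with $\|\nabla f(\theta)\|_2\ge C(\theta)\,|f^*-f(\theta)|$ for all $\theta$. Fix $h\in(0,1)$ and $\eta_{\max}>0$, and run $\theta_{t+1}=\theta_t+\eta_t\nabla f(\theta_t)$ for $t=1,2,\dots$, where $\eta_t$ is chosen by backtracking Armijo line-search, i.e. $\eta_t$ is the largest step-size in $(0,\eta_{\max}]$ satisfying $$f(\theta_t+\eta_t\nabla f(\theta_t))\ge f(\theta_t)+h\,\eta_t\,\|\nabla f(\theta_t)\|_2^2 .$$ Assume (iii) $\mu:=\inf_{t\ge 1}[C(\theta_t)]^2>0$. Then for every $T\ge 1$, $$f^*-f(\theta_{T+1})\le \max\Big\{\frac{L}{2h(1-h)},\ \frac{1}{h\,\eta_{\max}}\Big\}\frac{1}{\mu\, T}.$$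
   Context: $f$ is $L$-smooth means $|f(\theta)-f(\theta')-\langle\nabla f(\theta'),\theta-\theta'\rangle|\le \frac{L}{2}\|\theta-\theta'\|_2^2$ for all $\theta,\theta'$. (In the paper $f$ is the policy-gradient objective of a softmax policy, e.g. $f(\theta)=\langle\pi_\theta,r\rangle$ for bandits or $f(\theta)=V^{\pi_\theta}(\rho)$ for tabular MDPs, but the result is stated for an abstract $f$ with these properties.) *)

theory Defs
  imports "HOL-Analysis.Analysis"
begin

end

theory Submission
  imports Defs
begin

text \<open>
  By smoothness every step size \<open>e\<close> with \<open>L e \<le> 2(1 - h)\<close> passes the Armijo test, so the
  maximal step chosen by the line search is at least \<open>1/(h M)\<close>, where \<open>M\<close> is the
  maximum in the bound, and each iteration increases \<open>f\<close> by at least \<open>\<parallel>\<nabla>f\<parallel>\<^sup>2/M\<close>.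
  The Lojasiewicz inequality turns this into \<open>\<delta>' \<le> \<delta> - (\<mu>/M) \<delta>\<^sup>2\<close> for consecutive
  sub-optimality gaps, hence \<open>1/\<delta>\<close> grows by at least \<open>\<mu>/M\<close> per step.
\<close>

lemma smooth_ascent_step:
  fixes f :: "'a::real_inner \<Rightarrow> real"
  assumes smooth: "\<bar>f (x + e *\<^sub>R g) - f x - inner g ((x + e *\<^sub>R g) - x)\<bar>
      \<le> L / 2 * (norm ((x + e *\<^sub>R g) - x))\<^sup>2"
  shows "f (x + e *\<^sub>R g) \<ge> f x + e * (norm g)\<^sup>2 - L / 2 * e\<^sup>2 * (norm g)\<^sup>2"
proof -
  have linear: "inner g ((x + e *\<^sub>R g) - x) = e * (norm g)\<^sup>2"
    by (simp add: power2_norm_eq_inner)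
  have quadratic: "(norm ((x + e *\<^sub>R g) - x))\<^sup>2 = e\<^sup>2 * (norm g)\<^sup>2"
    by (simp add: power_mult_distrib)
  show ?thesis
    using smooth unfolding linear quadratic abs_le_iff by linarith
qed

lemma armijo_holds_for_small_step:
  fixes f :: "'a::real_inner \<Rightarrow> real"
  assumes smooth: "\<bar>f (x + e *\<^sub>R g) - f x - inner g ((x + e *\<^sub>R g) - x)\<bar>
      \<le> L / 2 * (norm ((x + e *\<^sub>R g) - x))\<^sup>2"
    and "0 \<le> e" and "L * e \<le> 2 * (1 - h)"
  shows "f (x + e *\<^sub>R g) \<ge> f x + h * e * (norm g)\<^sup>2"
proof -
  have "L * e * (e * (norm g)\<^sup>2) \<le> 2 * (1 - h) * (e * (norm g)\<^sup>2)"
    using assms(2,3) by (intro mult_right_mono) auto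
  then have "L / 2 * e\<^sup>2 * (norm g)\<^sup>2 \<le> (1 - h) * e * (norm g)\<^sup>2"
    by (simp add: power2_eq_square algebra_simps)
  with smooth_ascent_step[OF smooth] show ?thesis
    by (simp add: algebra_simps)
qed

lemma armijo_constant_pos:
  fixes L h eta_max :: real
  assumes "0 < h" and "0 < eta_max"
  shows "0 < max (L / (2 * h * (1 - h))) (1 / (h * eta_max))"
proof -
  have "0 < 1 / (h * eta_max)"
    using assms by simp
  then show ?thesis
    by linarith
qed

lemma armijo_line_search_progress:
  fixes f :: "'a::real_inner \<Rightarrow> real"
  assumes smooth: "\<And>y. \<bar>f y - f x - inner g (y - x)\<bar> \<le> L / 2 * (norm (y - x))\<^sup>2"
    and h: "0 < h" "h < 1"
    and eta_max: "eta_max > 0"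
    and armijo: "f (x + eta *\<^sub>R g) \<ge> f x + h * eta * (norm g)\<^sup>2"
    and maximal: "\<And>e. 0 < e \<Longrightarrow> e \<le> eta_max \<Longrightarrow>
        f (x + e *\<^sub>R g) \<ge> f x + h * e * (norm g)\<^sup>2 \<Longrightarrow> e \<le> eta"
  shows "f (x + eta *\<^sub>R g) \<ge> f x + (norm g)\<^sup>2 / max (L / (2 * h * (1 - h))) (1 / (h * eta_max))"
proof -
  define M where "M = max (L / (2 * h * (1 - h))) (1 / (h * eta_max))"
  define e0 where "e0 = 1 / (h * M)"
  have M_pos: "M > 0"
    unfolding M_def using h(1) eta_max by (rule armijo_constant_pos)
  then have e0_pos: "e0 > 0"
    using h by (simp add: e0_def)
  have "1 / (h * eta_max) \<le> M"
    unfolding M_def by simp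
  then have e0_le: "e0 \<le> eta_max"
    using h eta_max M_pos by (simp add: e0_def field_simps)
  have "L / (2 * h * (1 - h)) \<le> M"
    unfolding M_def by simp
  then have "L * e0 \<le> 2 * (1 - h)"
    using h M_pos by (simp add: e0_def field_simps)
  then have "f (x + e0 *\<^sub>R g) \<ge> f x + h * e0 * (norm g)\<^sup>2"
    using e0_pos by (intro armijo_holds_for_small_step[OF smooth]) auto
  then have "e0 \<le> eta"
    using maximal e0_pos e0_le by blast
  then have "h * e0 * (norm g)\<^sup>2 \<le> h * eta * (norm g)\<^sup>2"
    using h by (intro mult_right_mono) auto
  moreover have "h * e0 = 1 / M"
    using h by (simp add: e0_def)
  ultimately show ?thesis
    using armijo by (simp add: M_def)
qed

lemma inverse_increase_of_quadratic_decrease: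
  fixes x y a :: real
  assumes "0 < y" and "0 \<le> a" and decrease: "y \<le> x - a * x\<^sup>2"
  shows "1 / x + a \<le> 1 / y"
proof -
  have "0 \<le> a * x\<^sup>2"
    using \<open>0 \<le> a\<close> by simp
  then have "y \<le> x" "x > 0"
    using decrease \<open>0 < y\<close> by linarith+
  then have "a * x * y \<le> a * x * x"
    using \<open>0 \<le> a\<close> by (intro mult_left_mono) auto
  then have "y + a * x * y \<le> x"
    using decrease by (simp add: power2_eq_square mult.assoc)
  then show ?thesis
    using \<open>0 < y\<close> \<open>x > 0\<close> by (simp add: field_simps)
qed

lemma quadratic_decrease_rate:
  fixes d :: "nat \<Rightarrow> real"
  assumes a: "a > 0"
    and nonneg: "\<And>t. d t \<ge> 0"
    and decrease: "\<And>t. t \<ge> 1 \<Longrightarrow> d (t + 1) \<le> d t - a * (d t)\<^sup>2"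
    and n: "n \<ge> 1"
  shows "d (n + 1) \<le> 1 / (a * n)"
proof -
  have inverse_grows: "d (m + 1) > 0 \<longrightarrow> a * m \<le> 1 / d (m + 1)" for m
  proof (induction m)
    case 0
    then show ?case by simp
  next
    case (Suc m)
    show ?case
    proof
      assume pos: "d (Suc m + 1) > 0"
      have step: "d (m + 2) \<le> d (m + 1) - a * (d (m + 1))\<^sup>2"
        using decrease[of "m + 1"] by simp
      moreover have "0 \<le> a * (d (m + 1))\<^sup>2"
        using a by simp
      ultimately have "d (m + 1) > 0"
        using pos by simp
      then have "a * m \<le> 1 / d (m + 1)"
        using Suc.IH by blast
      moreover have "1 / d (m + 1) + a \<le> 1 / d (m + 2)"
        using pos a step by (intro inverse_increase_of_quadratic_decrease) auto
      ultimately show "a * Suc m \<le> 1 / d (Suc m + 1)"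
        by (simp add: algebra_simps)
    qed
  qed
  show ?thesis
  proof (cases "d (n + 1) > 0")
    case True
    then have "a * n \<le> 1 / d (n + 1)"
      using inverse_grows by blast
    then show ?thesis
      using a n True by (simp add: field_simps)
  next
    case False
    then show ?thesis
      using a nonneg[of "n + 1"] by simp
  qed
qed

lemma lojasiewicz_gap_decrease:
  fixes f :: "'a \<Rightarrow> real"
  assumes progress: "f x' \<ge> f x + (norm g)\<^sup>2 / M" and "M > 0"
    and loj: "norm g \<ge> c * \<bar>S - f x\<bar>" and "c \<ge> 0" and "mu \<le> c\<^sup>2"
    and "f x \<le> S"
  shows "S - f x' \<le> (S - f x) - mu / M * (S - f x)\<^sup>2"
proof -
  have "mu * (S - f x)\<^sup>2 \<le> (c * (S - f x))\<^sup>2"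
    using \<open>mu \<le> c\<^sup>2\<close> by (simp add: power_mult_distrib mult_right_mono)
  also have "\<dots> \<le> (norm g)\<^sup>2"
    using loj \<open>c \<ge> 0\<close> \<open>f x \<le> S\<close> by (intro power_mono) auto
  finally have "mu / M * (S - f x)\<^sup>2 \<le> (norm g)\<^sup>2 / M"
    using \<open>M > 0\<close> by (simp add: divide_right_mono)
  with progress show ?thesis
    by simp
qed

theorem theorem1:
  fixes f :: "real^'d \<Rightarrow> real"
    and grad :: "real^'d \<Rightarrow> real^'d"
    and C :: "real^'d \<Rightarrow> real"
    and L h eta_max :: real
    and theta :: "nat \<Rightarrow> real^'d"
    and eta :: "nat \<Rightarrow> real"
    and T :: nat
  assumes grad: "\<And>x. GDERIV f x :> grad x"
    and bdd: "bdd_above (range f)"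
    and smooth: "\<And>x y. \<bar>f x - f y - inner (grad y) (x - y)\<bar> \<le> L / 2 * (norm (x - y))\<^sup>2"
    and C_pos: "\<And>x. C x > 0"
    and loj: "\<And>x. norm (grad x) \<ge> C x * \<bar>Sup (range f) - f x\<bar>"
    and h: "0 < h" "h < 1"
    and eta_max: "eta_max > 0"
    and iter: "\<And>t. t \<ge> 1 \<Longrightarrow> theta (t + 1) = theta t + eta t *\<^sub>R grad (theta t)"
    and armijo_mem: "\<And>t. t \<ge> 1 \<Longrightarrow> 0 < eta t \<and> eta t \<le> eta_max \<and>
        f (theta t + eta t *\<^sub>R grad (theta t)) \<ge> f (theta t) + h * eta t * (norm (grad (theta t)))\<^sup>2"
    and armijo_max: "\<And>t e. t \<ge> 1 \<Longrightarrow> 0 < e \<Longrightarrow> e \<le> eta_max \<Longrightarrow>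
        f (theta t + e *\<^sub>R grad (theta t)) \<ge> f (theta t) + h * e * (norm (grad (theta t)))\<^sup>2 \<Longrightarrow> e \<le> eta t"
    and mu_pos: "(INF t\<in>{1..}. (C (theta t))\<^sup>2) > 0"
    and T: "T \<ge> 1"
  shows "Sup (range f) - f (theta (T + 1))
    \<le> max (L / (2 * h * (1 - h))) (1 / (h * eta_max)) * (1 / ((INF t\<in>{1..}. (C (theta t))\<^sup>2) * real T))"
proof -
  define mu where "mu = (INF t\<in>{1..}. (C (theta t))\<^sup>2)"
  define M where "M = max (L / (2 * h * (1 - h))) (1 / (h * eta_max))"
  define gap where "gap t = Sup (range f) - f (theta t)" for t
  have M_pos: "M > 0"
    unfolding M_def using h(1) eta_max by (rule armijo_constant_pos)
  have below_sup: "f x \<le> Sup (range f)" for x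
    using bdd by (simp add: cSup_upper)
  have decrease: "gap (t + 1) \<le> gap t - mu / M * (gap t)\<^sup>2" if t: "t \<ge> 1" for t
  proof -
    have "f (theta (t + 1)) \<ge> f (theta t) + (norm (grad (theta t)))\<^sup>2 / M"
      unfolding iter[OF t] M_def
      using armijo_mem[OF t] armijo_max[OF t]
      by (intro armijo_line_search_progress[OF smooth h eta_max]) auto
    moreover have "mu \<le> (C (theta t))\<^sup>2"
      unfolding mu_def using t by (intro cINF_lower bdd_belowI[where m = 0]) auto
    ultimately show ?thesis
      unfolding gap_def using M_pos loj C_pos below_sup
      by (intro lojasiewicz_gap_decrease) (auto intro: less_imp_le)
  qed
  have gap_nonneg: "gap t \<ge> 0" for t
    using below_sup by (simp add: gap_def)
  have "mu / M > 0"
    using mu_pos M_pos by (simp add: mu_def)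
  then have "gap (T + 1) \<le> 1 / (mu / M * T)"
    using quadratic_decrease_rate[of "mu / M" gap] gap_nonneg decrease T by blast
  then show ?thesis
    by (simp add: gap_def M_def mu_def)
qed

end
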